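(* Consider the robust dynamic pricing problem with valuation $v^\star\in[0,1]$, horizon $T$, and at most $C$ corrupted feedback observations. If $C$ is known to the learner, then there exists a pricing algorithm with regret \[ R_T\le\mathcal O(C+\log T), \] with a hidden constant independent of $T$, $C$, $v^\star$ and the adversary.
   Context: Robust dynamic pricing: there are $T$ rounds and an unknown valuation $v^\star$. At each round $t$ the seller posts a price $p_t\in[0,1]$ (based on past observations). The true sale indicator is $y_t=\mathbbm 1\{p_t\le v^\star\}$; the seller observes $\sigma_t\in\{0,1\}$, and at most $C$ rounds are corrupted: $|\{t\in[T]:\sigma_t\neq y_t\}|\le C$, where on corrupted rounds $\sigma_t$ may be chosen adversarially. Revenue is $r_t=p_t\,\mathbbm 1\{p_t\le v^\star\}$ and regret is $R_T=Tv^\star-\sum_{t=1}^T r_t$. $\log$ is base $2$. *)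

theory Defs
  imports Complex_Main
begin

text \<open>A (deterministic) pricing algorithm receives the horizon T, the corruption
budget C and the history of (posted price, observed feedback) pairs, and
returns the next price. An (adaptive) adversary receives the history and the
currently posted price and returns the observed feedback sigma_t.\<close>

type_synonym pricing_alg = "nat \<Rightarrow> nat \<Rightarrow> (real \<times> bool) list \<Rightarrow> real"
type_synonym adversary = "(real \<times> bool) list \<Rightarrow> real \<Rightarrow> bool"

fun hist :: "pricing_alg \<Rightarrow> adversary \<Rightarrow> nat \<Rightarrow> nat \<Rightarrow> nat \<Rightarrow> (real \<times> bool) list" where
  "hist alg adv T C 0 = []"
| "hist alg adv T C (Suc t) =
     (let h = hist alg adv T C t; p = alg T C h in h @ [(p, adv h p)])"

definition price :: "pricing_alg \<Rightarrow> adversary \<Rightarrow> nat \<Rightarrow> nat \<Rightarrow> nat \<Rightarrow> real" where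
  "price alg adv T C t = alg T C (hist alg adv T C t)"

definition feedback :: "pricing_alg \<Rightarrow> adversary \<Rightarrow> nat \<Rightarrow> nat \<Rightarrow> nat \<Rightarrow> bool" where
  "feedback alg adv T C t = adv (hist alg adv T C t) (price alg adv T C t)"

definition num_corrupted :: "pricing_alg \<Rightarrow> adversary \<Rightarrow> real \<Rightarrow> nat \<Rightarrow> nat \<Rightarrow> nat" where
  "num_corrupted alg adv v T C =
     card {t \<in> {..<T}. feedback alg adv T C t \<noteq> (price alg adv T C t \<le> v)}"

definition regret :: "pricing_alg \<Rightarrow> adversary \<Rightarrow> real \<Rightarrow> nat \<Rightarrow> nat \<Rightarrow> real" where
  "regret alg adv v T C =
     real T * v - (\<Sum>t<T. (if price alg adv T C t \<le> v then price alg adv T C t else 0))"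

end

theory Submission
  imports Defs
begin

text \<open>Prices are restricted to the grid \<open>q / 2^D\<close> with \<open>D = \<lceil>log T\<rceil>\<close>, and the grid index \<open>j\<close>
of \<open>v\<close> is located by a backtracking binary search on the complete binary tree whose node
\<open>(d, i)\<close> owns the cell \<open>[i 2^(D-d), (i+1) 2^(D-d))\<close> of grid indices. At a node the learner
first checks both endpoints of the cell, returning to the parent when an answer says that \<open>j\<close>
is not in the cell, and only then descends through the midpoint. A potential that counts the
levels on the path to the leaf \<open>j\<close> positively and the levels off that path negatively rises
by at least 1 with every truthful answer and falls by at most 5 with every lie; since it never
exceeds \<open>3D + 2 + 3C\<close>, the search lasts fewer than \<open>3D + 3 + 9C\<close> rounds. A leaf is
exploited once it has been confirmed \<open>C + 1\<close> times, and every confirmation of a wrong leaf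
costs a lie, so the exploited leaf is \<open>j\<close>, whose price loses at most \<open>2^-D \<le> 1/T\<close> per round.\<close>

definition cell_lo :: "nat \<Rightarrow> nat \<Rightarrow> nat \<Rightarrow> nat" where
  "cell_lo D d i = i * 2 ^ (D - d)"

definition cell_hi :: "nat \<Rightarrow> nat \<Rightarrow> nat \<Rightarrow> nat" where
  "cell_hi D d i = (i + 1) * 2 ^ (D - d)"

definition cell_mid :: "nat \<Rightarrow> nat \<Rightarrow> nat \<Rightarrow> nat" where
  "cell_mid D d i = i * 2 ^ (D - d) + 2 ^ (D - Suc d)"

definition cell :: "nat \<Rightarrow> nat \<Rightarrow> nat \<Rightarrow> nat set" where
  "cell D d i = {cell_lo D d i ..< cell_hi D d i}"

lemma cell_lo_less_hi: "cell_lo D d i < cell_hi D d i"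
  by (simp add: cell_lo_def cell_hi_def)

lemma cell_hi_le: assumes "d \<le> D" "i < 2 ^ d" shows "cell_hi D d i \<le> 2 ^ D"
proof -
  have "(i + 1) * 2 ^ (D - d) \<le> 2 ^ d * 2 ^ (D - d)"
    using assms(2) by (intro mult_right_mono) auto
  also have "\<dots> = 2 ^ D"
    using assms(1) by (simp flip: power_add)
  finally show ?thesis by (simp add: cell_hi_def)
qed

lemma cell_halves:
  assumes "d < D"
  shows "cell_lo D d i = 2 * i * 2 ^ (D - Suc d)" "cell_mid D d i = (2 * i + 1) * 2 ^ (D - Suc d)"
    "cell_hi D d i = (2 * i + 2) * 2 ^ (D - Suc d)"
  using power_Suc[of "2::nat" "D - Suc d"] Suc_diff_Suc[OF assms]
  by (simp_all add: cell_lo_def cell_mid_def cell_hi_def algebra_simps)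

lemma cell_mid_less_hi: "d < D \<Longrightarrow> cell_mid D d i < cell_hi D d i"
  by (simp add: cell_halves)

lemma mem_cell_child_iff:
  assumes "d < D" "r \<le> 1"
  shows "j \<in> cell D (Suc d) (2 * i + r) \<longleftrightarrow> j \<in> cell D d i \<and> (r = 1 \<longleftrightarrow> cell_mid D d i \<le> j)"
proof -
  have child: "cell_lo D (Suc d) (2 * i + r) = (2 * i + r) * 2 ^ (D - Suc d)"
    "cell_hi D (Suc d) (2 * i + r) = (2 * i + r + 1) * 2 ^ (D - Suc d)"
    by (simp_all add: cell_lo_def cell_hi_def)
  have "r = 0 \<or> r = 1" using assms(2) by auto
  then show ?thesis
    unfolding cell_def atLeastLessThan_iff child cell_halves[OF assms(1)]
    by (auto simp: algebra_simps)
qed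

lemma mem_cell_parent: assumes "d < D" "j \<in> cell D (Suc d) i" shows "j \<in> cell D d (i div 2)"
  using mem_cell_child_iff[OF assms(1), of "i mod 2" j "i div 2"] assms(2) by simp

lemma mem_cell_root: "j < 2 ^ D \<Longrightarrow> j \<in> cell D 0 0"
  by (simp add: cell_def cell_lo_def cell_hi_def)

lemma cell_leaf: "cell_lo D D i = i" "cell_hi D D i = Suc i" "cell D D i = {i}"
  by (auto simp: cell_def cell_lo_def cell_hi_def)

fun branch_depth :: "nat \<Rightarrow> nat \<Rightarrow> nat \<Rightarrow> nat \<Rightarrow> nat" where
  "branch_depth D j 0 i = 0"
| "branch_depth D j (Suc d) i = (if j \<in> cell D (Suc d) i then Suc d else branch_depth D j d (i div 2))"

lemma branch_depth_le: "branch_depth D j d i \<le> d"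
  by (induction d arbitrary: i) (auto intro: le_SucI)

lemma branch_depth_eq: "j \<in> cell D d i \<Longrightarrow> branch_depth D j d i = d"
  by (cases d) auto

datatype phase = Probe_Low | Probe_High | Probe_Mid

text \<open>In \<open>Search d i ph cnt\<close> the learner is at node \<open>(d, i)\<close> and posts the endpoint or
midpoint of its cell selected by \<open>ph\<close>; \<open>cnt k\<close> counts the completed confirmations of
leaf \<open>k\<close>. \<open>Exploit i\<close> posts the grid price \<open>i\<close> forever.\<close>

datatype state = Search nat nat phase "nat \<Rightarrow> nat" | Exploit nat

definition confirm_leaf :: "nat \<Rightarrow> nat \<Rightarrow> nat \<Rightarrow> (nat \<Rightarrow> nat) \<Rightarrow> state" where
  "confirm_leaf D C i cnt =
     (if C \<le> cnt i then Exploit i else Search D i Probe_Low (cnt(i := Suc (cnt i))))"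

definition accept_cell :: "nat \<Rightarrow> nat \<Rightarrow> nat \<Rightarrow> nat \<Rightarrow> (nat \<Rightarrow> nat) \<Rightarrow> state" where
  "accept_cell D C d i cnt = (if d = D then confirm_leaf D C i cnt else Search d i Probe_Mid cnt)"

text \<open>The index \<open>2^D\<close>, right end of the rightmost cells, is never queried: as \<open>j < 2^D\<close> the
answer would carry no information. Backtracking from the root stays at the root (\<open>0 - 1 = 0\<close> on \<^typ>\<open>nat\<close>).\<close>

fun step :: "nat \<Rightarrow> nat \<Rightarrow> state \<Rightarrow> bool \<Rightarrow> state" where
  "step D C (Search d i Probe_Low cnt) sale =
     (if \<not> sale then Search (d - 1) (i div 2) Probe_Low cnt
      else if cell_hi D d i < 2 ^ D then Search d i Probe_High cnt
      else accept_cell D C d i cnt)"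
| "step D C (Search d i Probe_High cnt) sale =
     (if sale then Search (d - 1) (i div 2) Probe_Low cnt else accept_cell D C d i cnt)"
| "step D C (Search d i Probe_Mid cnt) sale =
     Search (Suc d) (2 * i + (if sale then 1 else 0)) Probe_Low cnt"
| "step D C (Exploit i) sale = Exploit i"

fun query :: "nat \<Rightarrow> state \<Rightarrow> nat" where
  "query D (Search d i Probe_Low cnt) = cell_lo D d i"
| "query D (Search d i Probe_High cnt) = cell_hi D d i"
| "query D (Search d i Probe_Mid cnt) = cell_mid D d i"
| "query D (Exploit i) = i"

fun wf_state :: "nat \<Rightarrow> nat \<Rightarrow> state \<Rightarrow> bool" where
  "wf_state D C (Search d i ph cnt) \<longleftrightarrow>
     d \<le> D \<and> i < 2 ^ d \<and> (ph = Probe_High \<longrightarrow> cell_hi D d i < 2 ^ D) \<and>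
     (ph = Probe_Mid \<longrightarrow> d < D) \<and> (\<forall>k. cnt k \<le> C)"
| "wf_state D C (Exploit i) \<longleftrightarrow> i < 2 ^ D"

lemma div2_less_pow_pred: "(i::nat) < 2 ^ d \<Longrightarrow> i div 2 < 2 ^ (d - Suc 0)"
  by (cases d) auto

lemma wf_state_accept_cell:
  "d \<le> D \<Longrightarrow> i < 2 ^ d \<Longrightarrow> \<forall>k. cnt k \<le> C \<Longrightarrow> wf_state D C (accept_cell D C d i cnt)"
  by (auto simp: accept_cell_def confirm_leaf_def)

lemma wf_state_step: "wf_state D C s \<Longrightarrow> wf_state D C (step D C s sale)"
  by (induction D C s sale rule: step.induct) (auto intro: div2_less_pow_pred simp: wf_state_accept_cell)

lemma query_less: assumes "wf_state D C s" shows "query D s < 2 ^ D"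
proof (cases s)
  case (Search d i ph cnt)
  then have "d \<le> D" "i < 2 ^ d" using assms by auto
  from cell_hi_le[OF this] show ?thesis
    using assms Search cell_lo_less_hi[of D d i] cell_mid_less_hi[of d D i]
    by (cases ph) auto
qed (use assms in simp)

text \<open>Phase ranks and offsets are
tuned so that a truthful answer gains at least 1 and a lie loses at most 5
(\<open>potential_step\<close>); each confirmation of leaf \<open>j\<close> adds 3 more.\<close>

fun phase_rank :: "phase \<Rightarrow> int" where
  "phase_rank Probe_Low = 0"
| "phase_rank Probe_High = 1"
| "phase_rank Probe_Mid = 2"

fun off_path_offset :: "nat \<Rightarrow> nat \<Rightarrow> nat \<Rightarrow> nat \<Rightarrow> phase \<Rightarrow> int" where
  "off_path_offset D j d i Probe_Low = 0"
| "off_path_offset D j d i Probe_High = (if cell_lo D d i \<le> j then 1 else -5)"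
| "off_path_offset D j d i Probe_Mid = -4"

definition node_potential :: "nat \<Rightarrow> nat \<Rightarrow> nat \<Rightarrow> nat \<Rightarrow> phase \<Rightarrow> int" where
  "node_potential D j d i ph =
     (if j \<in> cell D d i then 3 * int d + phase_rank ph
      else 3 * int (branch_depth D j d i) - 3 * (int d - int (branch_depth D j d i))
           + off_path_offset D j d i ph)"

fun potential :: "nat \<Rightarrow> nat \<Rightarrow> state \<Rightarrow> int" where
  "potential D j (Search d i ph cnt) = node_potential D j d i ph + 3 * int (cnt j)"
| "potential D j (Exploit i) = 0"

lemma node_potential_le: "d \<le> D \<Longrightarrow> node_potential D j d i ph \<le> 3 * int D + 2"
  using branch_depth_le[of D j d i] by (cases ph) (auto simp: node_potential_def)

lemma node_potential_backtrack:
  assumes "d \<le> D" "i < 2 ^ d" "j < 2 ^ D" "ph \<noteq> Probe_Mid"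
  shows "node_potential D j (d - 1) (i div 2) Probe_Low
           \<ge> node_potential D j d i ph + (if j \<in> cell D d i then -5 else 2)"
proof (cases d)
  case 0
  with assms show ?thesis by (cases ph) (auto simp: node_potential_def mem_cell_root)
next
  case (Suc d')
  with assms(1) have "d' < D" by simp
  show ?thesis
  proof (cases "j \<in> cell D d i")
    case True
    with Suc mem_cell_parent[OF \<open>d' < D\<close>] have "j \<in> cell D d' (i div 2)" by simp
    with True Suc assms(4) show ?thesis by (cases ph) (auto simp: node_potential_def)
  next
    case False
    with Suc assms(4) show ?thesis
      by (cases ph; cases "j \<in> cell D d' (i div 2)") (auto simp: node_potential_def branch_depth_eq)
  qed
qed

lemma node_potential_probe_high:
  "node_potential D j d i Probe_High \<ge> node_potential D j d i Probe_Low + (if cell_lo D d i \<le> j then 1 else -5)"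
  by (auto simp: node_potential_def cell_def)

lemma node_potential_descend:
  assumes "d < D"
  shows "node_potential D j (Suc d) (2 * i + (if sale then 1 else 0)) Probe_Low
           \<ge> node_potential D j d i Probe_Mid + (if sale = (cell_mid D d i \<le> j) then 1 else -5)"
proof -
  define r :: nat where "r = (if sale then 1 else 0)"
  have "r \<le> 1" by (simp add: r_def)
  from mem_cell_child_iff[OF assms this]
  have child: "j \<in> cell D (Suc d) (2 * i + r) \<longleftrightarrow> j \<in> cell D d i \<and> (sale \<longleftrightarrow> cell_mid D d i \<le> j)"
    by (simp add: r_def)
  have "(2 * i + r) div 2 = i" by (simp add: r_def)
  then have "j \<notin> cell D (Suc d) (2 * i + r) \<Longrightarrow> branch_depth D j (Suc d) (2 * i + r) = branch_depth D j d i"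
    by simp
  with child show ?thesis
    unfolding r_def[symmetric] by (cases "j \<in> cell D d i") (auto simp: node_potential_def branch_depth_eq)
qed

lemma potential_accept_cell:
  assumes "d \<le> D" "ph \<noteq> Probe_Mid" "accept_cell D C d i cnt = Search d' i' ph' cnt'"
  shows "potential D j (accept_cell D C d i cnt)
           \<ge> potential D j (Search d i ph cnt)
              + (if j \<in> cell D d i \<or> ph = Probe_High \<and> j < cell_lo D d i then 1 else -5)"
proof (cases "d = D")
  case True
  with assms(3) have "accept_cell D C d i cnt = Search D i Probe_Low (cnt(i := Suc (cnt i)))"
    by (auto simp: accept_cell_def confirm_leaf_def split: if_splits)
  with True assms(2) show ?thesis
    by (cases ph) (auto simp: node_potential_def cell_leaf)
next
  case False
  with assms(2) show ?thesis
    by (cases ph) (auto simp: accept_cell_def node_potential_def)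
qed

lemma potential_step:
  assumes "wf_state D C s" "j < 2 ^ D" "step D C s sale = Search d' i' ph' cnt'"
  shows "potential D j (step D C s sale) \<ge> potential D j s + (if sale = (query D s \<le> j) then 1 else -5)"
proof (cases s)
  case (Search d i ph cnt)
  with assms(1) have wf: "d \<le> D" "i < 2 ^ d" "ph = Probe_Mid \<longrightarrow> d < D" by auto
  note backtrack = node_potential_backtrack[OF wf(1,2) assms(2)]
  note accept = potential_accept_cell[OF wf(1), of _ C i cnt d' i' ph' cnt' j]
  show ?thesis
  proof (cases ph)
    case Probe_Low
    show ?thesis
    proof (cases "\<not> sale \<or> cell_hi D d i < 2 ^ D")
      case True
      with Search Probe_Low backtrack[of Probe_Low] node_potential_probe_high[of D j d i]
      show ?thesis by (auto simp: cell_def split: if_splits)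
    next
      case False
      with assms(2) have "j < cell_hi D d i" by simp
      with False Search Probe_Low assms(3) accept[of Probe_Low]
      show ?thesis by (auto simp: cell_def)
    qed
  next
    case Probe_High
    show ?thesis
    proof (cases sale)
      case True
      with Search Probe_High backtrack[of Probe_High]
      show ?thesis by (auto simp: cell_def split: if_splits)
    next
      case False
      have "j \<in> cell D d i \<or> j < cell_lo D d i \<longleftrightarrow> j < cell_hi D d i"
        using cell_lo_less_hi[of D d i] by (auto simp: cell_def)
      with False Search Probe_High assms(3) accept[of Probe_High]
      show ?thesis by auto
    qed
  next
    case Probe_Mid
    with Search wf(3) node_potential_descend[of d D j i sale] show ?thesis by simp
  qed
qed (use assms in simp)

text \<open>Confirming a leaf \<open>k \<noteq> j\<close> takes a lie: a false sale at \<open>k > j\<close> or a false no-sale at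
\<open>k + 1 \<le> j\<close>. In phase \<^const>\<open>Probe_High\<close> at a leaf above \<open>j\<close> the lie has already been told
while the confirmation is still pending.\<close>

fun lies_cover :: "nat \<Rightarrow> nat \<Rightarrow> nat \<Rightarrow> nat \<Rightarrow> state \<Rightarrow> bool" where
  "lies_cover D C j K (Search d i ph cnt) \<longleftrightarrow>
     (\<forall>k. k \<noteq> j \<longrightarrow> cnt k \<le> K) \<and> (ph = Probe_High \<and> d = D \<and> j < i \<longrightarrow> cnt i < K)"
| "lies_cover D C j K (Exploit i) \<longleftrightarrow> (i \<noteq> j \<longrightarrow> C < K)"

lemma lies_cover_mono: "lies_cover D C j K s \<Longrightarrow> K \<le> K' \<Longrightarrow> lies_cover D C j K' s"
  by (cases s) auto

lemma lies_cover_confirm_leaf: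
  "\<forall>k. k \<noteq> j \<longrightarrow> cnt k \<le> K \<Longrightarrow> (i \<noteq> j \<longrightarrow> cnt i < K) \<Longrightarrow> lies_cover D C j K (confirm_leaf D C i cnt)"
  by (auto simp: confirm_leaf_def)

lemma lies_cover_step:
  assumes "wf_state D C s" "j < 2 ^ D" "lies_cover D C j K s"
  shows "lies_cover D C j (K + (if sale = (query D s \<le> j) then 0 else 1)) (step D C s sale)"
proof (cases s)
  case (Search d i ph cnt)
  define K' where "K' = K + (if sale = (query D s \<le> j) then 0 else 1)"
  have "K \<le> K'" by (simp add: K'_def)
  from assms(3) Search have counts: "\<forall>k. k \<noteq> j \<longrightarrow> cnt k \<le> K'"
    by (auto simp: K'_def)
  have probe_low: "lies_cover D C j K' (Search d' i' Probe_Low cnt)" for d' i'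
    using counts by simp
  have accept: "lies_cover D C j K' (accept_cell D C d i cnt)"
    if "d = D \<Longrightarrow> i \<noteq> j \<Longrightarrow> cnt i < K'"
    using counts that by (auto simp: accept_cell_def intro: lies_cover_confirm_leaf)
  have "lies_cover D C j K' (step D C s sale)"
  proof (cases ph)
    case Probe_Low
    have lie: "K' = Suc K" if "d = D" "j < i" "sale"
      using that Search Probe_Low by (simp add: K'_def cell_leaf)
    from assms(3) Search have "i \<noteq> j \<Longrightarrow> cnt i \<le> K" by simp
    moreover from assms(1) Search have "cell_hi D d i \<le> 2 ^ D" by (auto intro: cell_hi_le)
    ultimately show ?thesis
      using assms(2) Search Probe_Low counts lie
      by (auto simp: cell_leaf intro!: probe_low accept)
  next
    case Probe_High
    have lie: "K' = Suc K" if "d = D" "i < j" "\<not> sale"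
      using that Search Probe_High by (simp add: K'_def cell_leaf)
    from assms(3) Search Probe_High have "i \<noteq> j \<Longrightarrow> cnt i \<le> K" "d = D \<Longrightarrow> j < i \<Longrightarrow> cnt i < K"
      by auto
    with Search Probe_High counts lie \<open>K \<le> K'\<close> show ?thesis
      by (auto simp: neq_iff intro!: probe_low accept)
  next
    case Probe_Mid
    with Search counts show ?thesis by simp
  qed
  then show ?thesis by (simp add: K'_def)
qed (use assms lies_cover_mono in auto)

definition search_state :: "nat \<Rightarrow> nat \<Rightarrow> bool list \<Rightarrow> state" where
  "search_state D C sales = foldl (step D C) (Search 0 0 Probe_Low (\<lambda>_. 0)) sales"

lemma wf_search_state: "wf_state D C (search_state D C sales)"
  by (induction sales rule: rev_induct) (auto simp: search_state_def wf_state_step)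

locale search_run =
  fixes D C j :: nat and sale :: "nat \<Rightarrow> bool"
  assumes target_less: "j < 2 ^ D"
begin

definition state_at :: "nat \<Rightarrow> state" where
  "state_at t = search_state D C (map sale [0..<t])"

definition lies :: "nat \<Rightarrow> nat" where
  "lies t = (\<Sum>s<t. if sale s = (query D (state_at s) \<le> j) then 0 else 1)"

lemma lies_mono: "t \<le> t' \<Longrightarrow> lies t \<le> lies t'"
  unfolding lies_def by (rule sum_mono2) auto

lemma state_at_Suc: "state_at (Suc t) = step D C (state_at t) (sale t)"
  by (simp add: state_at_def search_state_def)

lemma run_invariant:
  "wf_state D C (state_at t) \<and> lies_cover D C j (lies t) (state_at t) \<and>
   (\<forall>d i ph cnt. state_at t = Search d i ph cnt \<longrightarrow>
      int t - 6 * int (lies t) \<le> potential D j (state_at t))"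
proof (induction t)
  case 0
  have "j \<in> cell D 0 0" using target_less by (rule mem_cell_root)
  then show ?case by (simp add: state_at_def search_state_def lies_def node_potential_def)
next
  case (Suc t)
  then have wf: "wf_state D C (state_at t)" and cover: "lies_cover D C j (lies t) (state_at t)" by auto
  have lies_Suc: "lies (Suc t) = lies t + (if sale t = (query D (state_at t) \<le> j) then 0 else 1)"
    by (simp add: lies_def)
  have "int (Suc t) - 6 * int (lies (Suc t)) \<le> potential D j (state_at (Suc t))"
    if "state_at (Suc t) = Search d i ph cnt" for d i ph cnt
  proof -
    from that obtain d0 i0 ph0 cnt0 where "state_at t = Search d0 i0 ph0 cnt0"
      by (cases "state_at t") (auto simp: state_at_Suc)
    with Suc.IH have "int t - 6 * int (lies t) \<le> potential D j (state_at t)" by blast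
    with potential_step[OF wf target_less, of "sale t"] that lies_Suc show ?thesis
      by (auto simp: state_at_Suc split: if_splits)
  qed
  with wf_state_step[OF wf] lies_cover_step[OF wf target_less cover] lies_Suc
  show ?case by (simp add: state_at_Suc)
qed

lemma exploits_target_or_ends_early:
  assumes "lies t \<le> C"
  shows "state_at t = Exploit j \<or> t < 3 * D + 3 + 9 * C"
proof (cases "state_at t")
  case (Search d i ph cnt)
  with run_invariant[of t] have "d \<le> D" "cnt j \<le> C" "int t - 6 * int (lies t) \<le> potential D j (state_at t)"
    by auto
  with Search node_potential_le[of d D j i ph] assms show ?thesis by simp
next
  case (Exploit i)
  with run_invariant[of t] assms show ?thesis by auto
qed

end

definition horizon_depth :: "nat \<Rightarrow> nat" where
  "horizon_depth T = nat \<lceil>log 2 (real T)\<rceil>"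

lemma horizon_le_pow_depth: "real T \<le> 2 ^ horizon_depth T"
proof (cases "T = 0")
  case False
  then have "real T = 2 powr log 2 (real T)" by simp
  also have "\<dots> \<le> 2 powr real (horizon_depth T)"
    by (simp add: horizon_depth_def real_nat_ceiling_ge)
  finally show ?thesis by (simp add: powr_realpow)
qed simp

lemma horizon_depth_le: "1 \<le> T \<Longrightarrow> real (horizon_depth T) \<le> log 2 (real T) + 1"
  by (simp add: horizon_depth_def)

definition grid_index :: "nat \<Rightarrow> real \<Rightarrow> nat" where
  "grid_index D v = min (2 ^ D - 1) (nat \<lfloor>v * 2 ^ D\<rfloor>)"

lemma grid_index_less: "grid_index D v < 2 ^ D"
  by (simp add: grid_index_def min_less_iff_disj)

lemma grid_le_iff_le_grid_index:
  assumes "0 \<le> v" "q < 2 ^ D"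
  shows "real q / 2 ^ D \<le> v \<longleftrightarrow> q \<le> grid_index D v"
proof -
  have "real q / 2 ^ D \<le> v \<longleftrightarrow> real q \<le> v * 2 ^ D" by (simp add: divide_le_eq)
  also have "\<dots> \<longleftrightarrow> q \<le> nat \<lfloor>v * 2 ^ D\<rfloor>" by (simp add: le_nat_iff le_floor_iff assms(1))
  moreover have "q \<le> 2 ^ D - 1" using assms(2) by linarith
  ultimately show ?thesis by (simp add: grid_index_def)
qed

lemma grid_index_approx:
  assumes "v \<le> 1"
  shows "v - real (grid_index D v) / 2 ^ D \<le> 1 / 2 ^ D"
proof -
  have "v * 2 ^ D \<le> real (grid_index D v) + 1"
  proof (cases "nat \<lfloor>v * 2 ^ D\<rfloor> \<le> 2 ^ D - 1")
    case True
    then have "grid_index D v = nat \<lfloor>v * 2 ^ D\<rfloor>" by (simp add: grid_index_def)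
    then show ?thesis by linarith
  next
    case False
    then have "grid_index D v = 2 ^ D - 1" by (simp add: grid_index_def)
    with assms show ?thesis by simp
  qed
  then have "(v * 2 ^ D - real (grid_index D v)) / 2 ^ D \<le> 1 / 2 ^ D"
    by (intro divide_right_mono) auto
  then show ?thesis by (simp add: diff_divide_distrib)
qed

definition robust_search :: pricing_alg where
  "robust_search T C h =
     real (query (horizon_depth T) (search_state (horizon_depth T) C (map snd h))) / 2 ^ horizon_depth T"

lemma robust_search_range: "0 \<le> robust_search T C h \<and> robust_search T C h \<le> 1"
  using query_less[OF wf_search_state] by (simp add: robust_search_def less_imp_le)

lemma map_snd_hist: "map snd (hist alg adv T C t) = map (feedback alg adv T C) [0..<t]"
  by (induction t) (simp_all add: Let_def feedback_def price_def)

lemma sum_indicator_less: "(\<Sum>t<T. if t < M then 1 else 0 :: real) = real (min T M)"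
  by (induction T) (auto simp: min_def)

lemma regret_le_of_accurate_late_prices:
  fixes alg :: pricing_alg
  assumes "0 \<le> v" "v \<le> 1" "0 \<le> \<epsilon>" and price_nonneg: "\<And>t. 0 \<le> price alg adv T C t"
    and late_rounds: "\<And>t. t < T \<Longrightarrow> M \<le> t \<Longrightarrow>
       price alg adv T C t \<le> v \<and> v - price alg adv T C t \<le> \<epsilon>"
  shows "regret alg adv v T C \<le> real M + real T * \<epsilon>"
proof -
  define p where "p = price alg adv T C"
  have loss: "v - (if p t \<le> v then p t else 0) \<le> (if t < M then 1 else 0) + \<epsilon>" if "t < T" for t
  proof (cases "t < M")
    case True
    from price_nonneg[of t] assms(2) have "v - (if p t \<le> v then p t else 0) \<le> 1"
      by (simp add: p_def)
    with True assms(3) show ?thesis by simp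
  next
    case False
    with late_rounds[OF that] show ?thesis by (simp add: p_def)
  qed
  have "regret alg adv v T C = (\<Sum>t<T. v - (if p t \<le> v then p t else 0))"
    unfolding regret_def p_def by (simp add: sum_subtractf)
  also have "\<dots> \<le> (\<Sum>t<T. (if t < M then 1 else 0) + \<epsilon>)"
    by (rule sum_mono) (simp add: loss)
  also have "\<dots> = real (min T M) + real T * \<epsilon>"
    by (simp add: sum.distrib sum_indicator_less)
  also have "\<dots> \<le> real M + real T * \<epsilon>"
    by simp
  finally show ?thesis .
qed

lemma robust_search_regret_le:
  assumes "0 \<le> v" "v \<le> 1" "num_corrupted robust_search adv v T C \<le> C"
  shows "regret robust_search adv v T C \<le> 3 * real (horizon_depth T) + 4 + 9 * real C"
proof -
  define D where "D = horizon_depth T"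
  define p where "p = price robust_search adv T C"
  interpret search_run D C "grid_index D v" "feedback robust_search adv T C"
    by unfold_locales (rule grid_index_less)
  have p_eq: "p t = real (query D (state_at t)) / 2 ^ D" for t
    by (simp add: p_def price_def robust_search_def state_at_def map_snd_hist flip: D_def)
  have sold_iff: "p t \<le> v \<longleftrightarrow> query D (state_at t) \<le> grid_index D v" for t
    unfolding p_eq using grid_le_iff_le_grid_index[OF assms(1) query_less[OF wf_search_state]]
    by (simp add: state_at_def)
  have "num_corrupted robust_search adv v T C
          = card {t \<in> {..<T}. feedback robust_search adv T C t \<noteq> (p t \<le> v)}"
    by (simp add: num_corrupted_def p_def)
  also have "\<dots> = lies T"
    unfolding card_eq_sum sum.inter_filter[OF finite_lessThan] lies_def sold_iff
    by (intro sum.cong) auto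
  finally have "lies T \<le> C" using assms(3) by simp
  have "p t \<le> v \<and> v - p t \<le> 1 / 2 ^ D" if "t < T" "3 * D + 3 + 9 * C \<le> t" for t
  proof -
    from that lies_mono[of t T] \<open>lies T \<le> C\<close> exploits_target_or_ends_early[of t]
    have "state_at t = Exploit (grid_index D v)" by simp
    with sold_iff[of t] p_eq[of t] grid_index_approx[OF assms(2), of D] show ?thesis by simp
  qed
  with regret_le_of_accurate_late_prices[OF assms(1,2),
      of "1 / 2 ^ D" robust_search adv T C "3 * D + 3 + 9 * C"]
  have "regret robust_search adv v T C \<le> 3 * real D + 3 + 9 * real C + real T / 2 ^ D"
    using robust_search_range by (simp add: p_def price_def)
  moreover have "real T / 2 ^ D \<le> 1"
    using horizon_le_pow_depth[of T] by (simp add: D_def)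
  ultimately show ?thesis unfolding D_def by linarith
qed

theorem theoremB2:
  shows "\<exists>K::real. \<exists>alg::pricing_alg.
           (\<forall>T C h. 0 \<le> alg T C h \<and> alg T C h \<le> 1) \<and>
           (\<forall>(T::nat) (C::nat) (v::real) (adv::adversary).
              2 \<le> T \<longrightarrow> 0 \<le> v \<longrightarrow> v \<le> 1 \<longrightarrow>
              num_corrupted alg adv v T C \<le> C \<longrightarrow>
              regret alg adv v T C \<le> K * (real C + log 2 (real T)))"
proof (intro exI[of _ 10] exI[of _ robust_search] conjI allI impI)
  show "0 \<le> robust_search T C h" "robust_search T C h \<le> 1" for T C h
    using robust_search_range by auto
  fix T C :: nat and v :: real and adv :: adversary
  assume "2 \<le> T" "0 \<le> v" "v \<le> 1" "num_corrupted robust_search adv v T C \<le> C"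
  then have "regret robust_search adv v T C \<le> 3 * real (horizon_depth T) + 4 + 9 * real C"
    by (intro robust_search_regret_le)
  also have "\<dots> \<le> 10 * (real C + log 2 (real T))"
  proof -
    from \<open>2 \<le> T\<close> have "1 \<le> log 2 (real T)" by simp
    moreover from \<open>2 \<le> T\<close> have "real (horizon_depth T) \<le> log 2 (real T) + 1"
      by (intro horizon_depth_le) simp
    ultimately show ?thesis by (simp add: distrib_left)
  qed
  finally show "regret robust_search adv v T C \<le> 10 * (real C + log 2 (real T))" .
qed

end
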